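(* Let $G$ be a complete geometric graph. Then every blocker for $\mathcal{T}_{\leq 3}(G)$ is a spanning tree of $G$.
   Context: A geometric graph is a graph whose vertices are points in the plane in general position (no three collinear) and whose edges are straight segments between pairs of vertices; $G$ is complete if all pairs of vertices are joined. $\mathcal{T}_{\leq k}(G)$ denotes the family of all simple (non-crossing) spanning trees of $G$ of (graph) diameter at most $k$. A subgraph $B$ blocks a family $\mathcal{F}$ of subgraphs if it shares at least one edge with every member of $\mathcal{F}$; a blocker of $\mathcal{F}$ is a subgraph that blocks $\mathcal{F}$ and has the smallest possible number of edges among all subgraphs blocking $\mathcal{F}$. *)

theory Defs
  imports "HOL-Analysis.Analysis"
begin

type_synonym point = "real \<times> real"
type_synonym edge = "point set"

definition general_position :: "point set \<Rightarrow> bool" where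
  "general_position P \<longleftrightarrow>
     (\<forall>a\<in>P. \<forall>b\<in>P. \<forall>c\<in>P. a \<noteq> b \<and> a \<noteq> c \<and> b \<noteq> c \<longrightarrow> \<not> collinear {a, b, c})"

text \<open>Edge set of the complete geometric graph on P (edges are 2-element vertex sets,
  drawn as the straight segment convex hull e).\<close>
definition complete_edges :: "point set \<Rightarrow> edge set" where
  "complete_edges P = {{a, b} | a b. a \<in> P \<and> b \<in> P \<and> a \<noteq> b}"

definition walk :: "edge set \<Rightarrow> point list \<Rightarrow> bool" where
  "walk E xs \<longleftrightarrow> xs \<noteq> [] \<and> (\<forall>i < length xs - 1. {xs ! i, xs ! Suc i} \<in> E)"

definition connected_graph :: "point set \<Rightarrow> edge set \<Rightarrow> bool" where
  "connected_graph V E \<longleftrightarrow>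
     (\<forall>u\<in>V. \<forall>v\<in>V. \<exists>xs. walk E xs \<and> hd xs = u \<and> last xs = v)"

definition has_cycle :: "edge set \<Rightarrow> bool" where
  "has_cycle E \<longleftrightarrow>
     (\<exists>xs. walk E xs \<and> distinct xs \<and> length xs \<ge> 3 \<and> {last xs, hd xs} \<in> E)"

definition spanning_tree :: "point set \<Rightarrow> edge set \<Rightarrow> bool" where
  "spanning_tree P T \<longleftrightarrow> T \<subseteq> complete_edges P \<and> connected_graph P T \<and> \<not> has_cycle T"

definition diameter_le :: "point set \<Rightarrow> edge set \<Rightarrow> nat \<Rightarrow> bool" where
  "diameter_le V E k \<longleftrightarrow>
     (\<forall>u\<in>V. \<forall>v\<in>V. \<exists>xs. walk E xs \<and> hd xs = u \<and> last xs = v \<and> length xs \<le> k + 1)"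

definition non_crossing :: "edge set \<Rightarrow> bool" where
  "non_crossing E \<longleftrightarrow>
     (\<forall>e\<in>E. \<forall>f\<in>E. e \<noteq> f \<longrightarrow> convex hull e \<inter> convex hull f \<subseteq> e \<inter> f)"

definition simple_trees_diam_le :: "point set \<Rightarrow> nat \<Rightarrow> edge set set" where
  "simple_trees_diam_le P k =
     {T. spanning_tree P T \<and> non_crossing T \<and> diameter_le P T k}"

definition blocks :: "edge set set \<Rightarrow> edge set \<Rightarrow> bool" where
  "blocks F B \<longleftrightarrow> (\<forall>T\<in>F. B \<inter> T \<noteq> {})"

definition is_blocker :: "point set \<Rightarrow> edge set set \<Rightarrow> edge set \<Rightarrow> bool" where
  "is_blocker P F B \<longleftrightarrow>
     B \<subseteq> complete_edges P \<and> blocks F B \<and>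
     (\<forall>B'. B' \<subseteq> complete_edges P \<and> blocks F B' \<longrightarrow> card B \<le> card B')"

end

theory Submission
  imports Defs
begin

text \<open>
  The star of all edges at one vertex meets every spanning tree, so a blocker \<open>B\<close> has fewer
  edges than there are points, and some point \<open>x\<close> has degree at most one in \<open>B\<close>.
  If \<open>x\<close> is isolated, a star centred at \<open>x\<close> avoids \<open>B\<close>. If \<open>x\<close> is a leaf with neighbour
  \<open>a\<close> and \<open>B\<close> is disconnected, choose a point \<open>q\<close> unreachable from \<open>x\<close> such that the open
  wedge at \<open>x\<close> between the rays towards \<open>a\<close> and \<open>q\<close> contains no unreachable point. Joining
  \<open>q\<close> to \<open>x\<close>, to \<open>a\<close> and to the points inside the wedge, and \<open>x\<close> to all other points, gives a
  non-crossing double star, a spanning tree of diameter 3 that avoids \<open>B\<close>. So \<open>B\<close> is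
  connected, and a connected graph with fewer edges than vertices has no cycle.
\<close>

section \<open>Walks, reachability and cycles\<close>

lemma walk_iff_successively:
  "walk E xs \<longleftrightarrow> xs \<noteq> [] \<and> successively (\<lambda>a b. {a, b} \<in> E) xs"
  by (auto simp: walk_def successively_conv_nth less_diff_conv)

lemma walk_remdups_adj:
  assumes "xs \<noteq> []" and "successively (\<lambda>a b. a = b \<or> {a, b} \<in> E) xs"
  shows "walk E (remdups_adj xs)"
proof -
  have "successively (\<lambda>a b. a = b \<or> {a, b} \<in> E) (remdups_adj xs)"
    using assms(2) by (rule successively_remdups_adjI)
  moreover have "successively (\<noteq>) (remdups_adj xs)"
    using distinct_adj_remdups_adj unfolding distinct_adj_def .
  ultimately show ?thesis
    using assms(1) by (auto simp: walk_iff_successively successively_conv_nth)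
qed

definition reachable :: "edge set \<Rightarrow> point \<Rightarrow> point \<Rightarrow> bool" where
  "reachable E u v \<longleftrightarrow> (\<exists>xs. walk E xs \<and> hd xs = u \<and> last xs = v)"

lemma connected_graph_iff_reachable:
  "connected_graph V E \<longleftrightarrow> (\<forall>u\<in>V. \<forall>v\<in>V. reachable E u v)"
  by (simp add: connected_graph_def reachable_def)

lemma reachable_refl: "reachable E u u"
  unfolding reachable_def by (rule exI[of _ "[u]"]) (simp add: walk_def)

lemma reachable_edge: "{u, v} \<in> E \<Longrightarrow> reachable E u v"
  unfolding reachable_def by (rule exI[of _ "[u, v]"]) (simp add: walk_iff_successively)

lemma reachable_sym:
  assumes "reachable E u v"
  shows "reachable E v u"
proof -
  obtain xs where xs: "walk E xs" "hd xs = u" "last xs = v"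
    using assms unfolding reachable_def by blast
  then have "walk E (rev xs)" "hd (rev xs) = v" "last (rev xs) = u"
    by (auto simp: walk_iff_successively successively_rev insert_commute hd_rev last_rev)
  then show ?thesis unfolding reachable_def by blast
qed

lemma reachable_trans:
  assumes "reachable E u v" and "reachable E v w"
  shows "reachable E u w"
proof -
  obtain xs where xs: "walk E xs" "hd xs = u" "last xs = v"
    using assms(1) unfolding reachable_def by blast
  obtain zs where zs: "walk E (v # zs)" "last (v # zs) = w"
    using assms(2) unfolding reachable_def walk_iff_successively by (metis list.collapse)
  have "walk E (xs @ zs)" "hd (xs @ zs) = u" "last (xs @ zs) = w"
    using xs zs by (auto simp: walk_iff_successively successively_append_iff successively_Cons)
  then show ?thesis unfolding reachable_def by blast
qed

definition hop_dist :: "edge set \<Rightarrow> point \<Rightarrow> point \<Rightarrow> nat" where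
  "hop_dist E u v = (LEAST n. \<exists>xs. walk E xs \<and> hd xs = u \<and> last xs = v \<and> length xs = n)"

lemma closer_neighbour:
  assumes "reachable E v r" and "v \<noteq> r"
  obtains w where "{v, w} \<in> E" and "hop_dist E w r < hop_dist E v r"
proof -
  let ?walk_of_length = "\<lambda>u n. \<exists>xs. walk E xs \<and> hd xs = u \<and> last xs = r \<and> length xs = n"
  have "\<exists>n. ?walk_of_length v n"
    using assms(1) unfolding reachable_def by blast
  then have "?walk_of_length v (hop_dist E v r)"
    unfolding hop_dist_def by (rule LeastI_ex)
  then obtain xs where xs: "walk E xs" "hd xs = v" "last xs = r" "length xs = hop_dist E v r"
    by blast
  then obtain w ys where xs_eq: "xs = v # w # ys"
    using assms(2) by (cases xs; cases "tl xs") (auto simp: walk_def)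
  have "{v, w} \<in> E" "walk E (w # ys)"
    using xs(1) by (auto simp: xs_eq walk_iff_successively)
  moreover have "last (w # ys) = r"
    using xs(3) by (simp add: xs_eq)
  ultimately have "hop_dist E w r \<le> length (w # ys)"
    unfolding hop_dist_def by (intro Least_le) auto
  also have "\<dots> < hop_dist E v r"
    using xs(4) by (simp add: xs_eq)
  finally show ?thesis using \<open>{v, w} \<in> E\<close> that by blast
qed

lemma has_cycle_two_neighbours:
  assumes "has_cycle E"
  obtains S where "finite S" and "3 \<le> card S"
    and "\<And>v. v \<in> S \<Longrightarrow> \<exists>a\<in>S. \<exists>b\<in>S. a \<noteq> b \<and> {v, a} \<in> E \<and> {v, b} \<in> E"
proof -
  obtain xs where xs: "walk E xs" "distinct xs" "3 \<le> length xs" "{last xs, hd xs} \<in> E"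
    using assms unfolding has_cycle_def by blast
  define n where "n = length xs"
  define next_index where "next_index j = (if j + 1 = n then 0 else j + 1)" for j
  have xs_ne: "xs \<noteq> []"
    using xs(3) by auto
  have cyclic_edge: "{xs ! j, xs ! next_index j} \<in> E" if "j < n" for j
  proof (cases "j + 1 = n")
    case True
    then have "j = n - 1" "next_index j = 0"
      by (simp_all add: next_index_def)
    then show ?thesis
      using xs(4) last_conv_nth[OF xs_ne] hd_conv_nth[OF xs_ne]
      by (simp add: next_index_def n_def insert_commute)
  next
    case False
    then show ?thesis
      using xs(1) that by (simp add: walk_def next_index_def n_def)
  qed
  show ?thesis
  proof (rule that)
    show "finite (set xs)" "3 \<le> card (set xs)"
      using xs(2,3) by (simp_all add: distinct_card)
  next
    fix v assume "v \<in> set xs"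
    then obtain i where i: "i < n" "v = xs ! i"
      by (auto simp: in_set_conv_nth n_def)
    define j where "j = (if i = 0 then n - 1 else i - 1)"
    have j: "j < n" "next_index j = i" and next_i: "next_index i < n" "next_index i \<noteq> j"
      using i(1) xs(3) by (auto simp: j_def next_index_def n_def)
    show "\<exists>a\<in>set xs. \<exists>b\<in>set xs. a \<noteq> b \<and> {v, a} \<in> E \<and> {v, b} \<in> E"
    proof (intro bexI conjI)
      show "xs ! next_index i \<noteq> xs ! j"
        using next_i j(1) nth_eq_iff_index_eq[OF xs(2)] by (simp add: n_def)
      show "{v, xs ! next_index i} \<in> E"
        using cyclic_edge[OF i(1)] i(2) by simp
      show "{v, xs ! j} \<in> E"
        using cyclic_edge[OF j(1)] i(2) j(2) by (simp add: insert_commute)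
      show "xs ! next_index i \<in> set xs" "xs ! j \<in> set xs"
        using next_i(1) j(1) by (simp_all add: n_def)
    qed
  qed
qed

section \<open>Counting edges\<close>

lemma complete_edgeE:
  assumes "e \<in> complete_edges V"
  obtains a b where "e = {a, b}" "a \<in> V" "b \<in> V" "a \<noteq> b"
  using assms unfolding complete_edges_def by blast

lemma complete_edge_through:
  assumes "e \<in> complete_edges V" and "x \<in> e"
  obtains a where "e = {x, a}"
proof -
  obtain p r where "e = {p, r}"
    using assms(1) by (rule complete_edgeE)
  then have "e = {x, r} \<or> e = {x, p}"
    using assms(2) by (auto simp: insert_commute)
  then show ?thesis
    using that by blast
qed

lemma doubleton_in_complete_edges_iff [simp]:
  "{a, b} \<in> complete_edges V \<longleftrightarrow> a \<in> V \<and> b \<in> V \<and> a \<noteq> b"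
proof
  show "{a, b} \<in> complete_edges V \<Longrightarrow> a \<in> V \<and> b \<in> V \<and> a \<noteq> b"
    by (auto simp: complete_edges_def doubleton_eq_iff)
  show "a \<in> V \<and> b \<in> V \<and> a \<noteq> b \<Longrightarrow> {a, b} \<in> complete_edges V"
    unfolding complete_edges_def by blast
qed

lemma finite_complete_edges: "finite V \<Longrightarrow> finite (complete_edges V)"
proof -
  assume "finite V"
  have "complete_edges V \<subseteq> (\<lambda>(a, b). {a, b}) ` (V \<times> V)"
    unfolding complete_edges_def by auto
  then show ?thesis
    using \<open>finite V\<close> by (meson finite_SigmaI finite_imageI finite_subset)
qed

lemma inj_on_edge_to_lower:
  fixes h :: "'a \<Rightarrow> 'b::order"
  assumes "\<And>v. v \<in> U \<Longrightarrow> h (f v) < h v"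
  shows "inj_on (\<lambda>v. {v, f v}) U"
proof (rule inj_onI)
  fix v w assume v: "v \<in> U" and w: "w \<in> U" and eq: "{v, f v} = {w, f w}"
  show "v = w"
  proof (rule ccontr)
    assume "v \<noteq> w"
    then have "v = f w" "w = f v"
      using eq by (auto simp: doubleton_eq_iff)
    then show False
      using assms[OF v] assms[OF w] by (metis less_asym)
  qed
qed

lemma closer_neighbour_map:
  assumes "connected_graph V E" and "r \<in> V"
  obtains f where "\<And>v. v \<in> V - {r} \<Longrightarrow> {v, f v} \<in> E \<and> hop_dist E (f v) r < hop_dist E v r"
proof -
  have "\<forall>v\<in>V - {r}. \<exists>w. {v, w} \<in> E \<and> hop_dist E w r < hop_dist E v r"
  proof
    fix v assume "v \<in> V - {r}"
    then have "reachable E v r" "v \<noteq> r"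
      using assms by (simp_all add: connected_graph_iff_reachable)
    then obtain w where "{v, w} \<in> E" "hop_dist E w r < hop_dist E v r"
      by (rule closer_neighbour)
    then show "\<exists>w. {v, w} \<in> E \<and> hop_dist E w r < hop_dist E v r"
      by blast
  qed
  then show ?thesis
    using that by (metis bchoice)
qed

text \<open>The edges from the vertices other than \<open>r\<close> to closer neighbours are distinct, and they miss
  a cycle edge at a cycle vertex farthest from \<open>r\<close>.\<close>

lemma card_le_card_edges_if_connected_has_cycle:
  assumes fin: "finite V" and E: "E \<subseteq> complete_edges V"
    and conn: "connected_graph V E" and cyc: "has_cycle E"
  shows "card V \<le> card E"
proof -
  obtain S where S: "finite S" "3 \<le> card S"
    and nbrs: "\<And>v. v \<in> S \<Longrightarrow> \<exists>a\<in>S. \<exists>b\<in>S. a \<noteq> b \<and> {v, a} \<in> E \<and> {v, b} \<in> E"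
    using has_cycle_two_neighbours[OF cyc] by blast
  then obtain r a where "r \<in> S" "{r, a} \<in> E"
    by (metis all_not_in_conv card.empty not_numeral_le_zero)
  then have r: "r \<in> V"
    using E by auto
  let ?h = "\<lambda>v. hop_dist E v r"
  obtain f where f: "\<And>v. v \<in> V - {r} \<Longrightarrow> {v, f v} \<in> E \<and> ?h (f v) < ?h v"
    using closer_neighbour_map[OF conn r] by blast
  let ?F = "(\<lambda>v. {v, f v}) ` (V - {r})"
  obtain m where "m \<in> S" and max_m: "Max (?h ` S) = ?h m"
    using obtains_MAX[OF S(1), where f = ?h] \<open>r \<in> S\<close> by blast
  obtain b c where bc: "b \<in> S" "c \<in> S" "b \<noteq> c" "{m, b} \<in> E" "{m, c} \<in> E"
    using nbrs[OF \<open>m \<in> S\<close>] by blast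
  have f_m: "f m = n" if n: "n \<in> S" and mn: "{m, n} \<in> ?F" for n
  proof -
    obtain v where v: "v \<in> V - {r}" "{m, n} = {v, f v}"
      using mn by blast
    have "?h n \<le> ?h m"
      using n S(1) by (simp flip: max_m)
    then have "\<not> (v = n \<and> f n = m)"
      using f[OF v(1)] by auto
    then show ?thesis
      using v(2) by (auto simp: doubleton_eq_iff)
  qed
  have "?F \<noteq> E"
    using f_m[OF bc(1)] f_m[OF bc(2)] bc(3-5) by metis
  moreover have "?F \<subseteq> E" "finite E"
    using f fin E finite_complete_edges finite_subset by blast+
  ultimately have "card ?F < card E"
    by (simp add: psubset_card_mono)
  then have "card (V - {r}) < card E"
    using inj_on_edge_to_lower[of "V - {r}" ?h f] f by (simp add: card_image)
  then show ?thesis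
    using r fin by simp
qed

lemma sum_degrees_eq_twice_card_edges:
  assumes fin: "finite V" and E: "E \<subseteq> complete_edges V"
  shows "(\<Sum>v\<in>V. card {e\<in>E. v \<in> e}) = 2 * card E"
proof -
  have finE: "finite E"
    using finite_complete_edges[OF fin] E finite_subset by blast
  have "(\<Sum>v\<in>V. card {e\<in>E. v \<in> e}) = (\<Sum>v\<in>V. \<Sum>e\<in>E. if v \<in> e then 1 else 0)"
    using finE by (simp add: sum.inter_filter[symmetric])
  also have "\<dots> = (\<Sum>e\<in>E. \<Sum>v\<in>V. if v \<in> e then 1 else 0)"
    by (rule sum.swap)
  also have "\<dots> = (\<Sum>e\<in>E. 2)"
  proof (rule sum.cong[OF refl])
    fix e assume "e \<in> E"
    then obtain a b where ab: "e = {a, b}" "a \<in> V" "b \<in> V" "a \<noteq> b"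
      using E by (blast elim: complete_edgeE)
    have "{v\<in>V. v \<in> e} = e"
      using ab(1-3) by blast
    moreover have "card e = 2"
      using ab(1,4) by simp
    ultimately show "(\<Sum>v\<in>V. if v \<in> e then 1 else 0) = (2::nat)"
      using fin by (simp add: sum.inter_filter[symmetric])
  qed
  finally show ?thesis
    by simp
qed

lemma exists_degree_le_1:
  assumes "finite V" and "E \<subseteq> complete_edges V" and "card E < card V"
  obtains v where "v \<in> V" and "card {e\<in>E. v \<in> e} \<le> 1"
proof -
  have "\<exists>v\<in>V. card {e\<in>E. v \<in> e} \<le> 1"
  proof (rule ccontr)
    assume "\<not> ?thesis"
    then have "(\<Sum>v\<in>V. 2) \<le> (\<Sum>v\<in>V. card {e\<in>E. v \<in> e})"
      by (intro sum_mono) auto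
    then show False
      using sum_degrees_eq_twice_card_edges[OF assms(1,2)] assms(3) by simp
  qed
  then show ?thesis
    using that by blast
qed

section \<open>Wedges and segments\<close>

definition open_wedge :: "'a::real_vector \<Rightarrow> 'a \<Rightarrow> 'a \<Rightarrow> 'a set" where
  "open_wedge x a b = {x + s *\<^sub>R (a - x) + t *\<^sub>R (b - x) | s t. 0 < s \<and> 0 < t}"

lemma collinear_if_diff_scaled:
  fixes x q p :: "'a::real_vector"
  assumes "p - x = k *\<^sub>R (q - x)"
  shows "collinear {x, q, p}"
proof -
  have "collinear {0, q - x, p - x}"
    unfolding collinear_lemma using assms by blast
  then show ?thesis
    by (subst insert_commute) (simp add: collinear_3[of q x p])
qed

lemma not_collinear_combination_eq_0:
  fixes x a b :: "'a::real_vector"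
  assumes nc: "\<not> collinear {x, a, b}" and eq: "s *\<^sub>R (a - x) + t *\<^sub>R (b - x) = 0"
  shows "s = 0 \<and> t = 0"
proof (rule ccontr)
  assume "\<not> (s = 0 \<and> t = 0)"
  then consider "s \<noteq> 0" | "t \<noteq> 0"
    by blast
  then show False
  proof cases
    case 1
    have "a - x = (1 / s) *\<^sub>R (s *\<^sub>R (a - x))"
      using 1 by simp
    also have "s *\<^sub>R (a - x) = - (t *\<^sub>R (b - x))"
      using eq by (simp add: eq_neg_iff_add_eq_0)
    finally have "a - x = (- t / s) *\<^sub>R (b - x)"
      by simp
    then have "collinear {x, b, a}"
      by (rule collinear_if_diff_scaled)
    then show False
      using nc by (simp add: insert_commute)
  next
    case 2
    have "b - x = (1 / t) *\<^sub>R (t *\<^sub>R (b - x))"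
      using 2 by simp
    also have "t *\<^sub>R (b - x) = - (s *\<^sub>R (a - x))"
      using eq by (simp add: eq_neg_iff_add_eq_0 add.commute)
    finally have "b - x = (- s / t) *\<^sub>R (a - x)"
      by simp
    then show False
      using nc collinear_if_diff_scaled by blast
  qed
qed

lemma open_wedge_mono:
  assumes "p \<in> open_wedge x a q"
  shows "open_wedge x a p \<subseteq> open_wedge x a q"
proof
  fix z assume "z \<in> open_wedge x a p"
  then obtain s t where st: "0 < s" "0 < t" "z = x + s *\<^sub>R (a - x) + t *\<^sub>R (p - x)"
    unfolding open_wedge_def by blast
  obtain s' t' where st': "0 < s'" "0 < t'" "p - x = s' *\<^sub>R (a - x) + t' *\<^sub>R (q - x)"
    using assms unfolding open_wedge_def by auto
  have "z = x + (s + t * s') *\<^sub>R (a - x) + (t * t') *\<^sub>R (q - x)"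
    using st(3) unfolding st'(3) by (simp add: algebra_simps)
  moreover have "0 < s + t * s'" "0 < t * t'"
    using st st' by (simp_all add: add_pos_pos)
  ultimately show "z \<in> open_wedge x a q"
    unfolding open_wedge_def by blast
qed

lemma not_in_own_open_wedge:
  assumes "\<not> collinear {x, a, p}"
  shows "p \<notin> open_wedge x a p"
proof
  assume "p \<in> open_wedge x a p"
  then obtain s t where st: "0 < s" "0 < t" "p = x + s *\<^sub>R (a - x) + t *\<^sub>R (p - x)"
    unfolding open_wedge_def by blast
  have "s *\<^sub>R (a - x) + (t - 1) *\<^sub>R (p - x) = (x + s *\<^sub>R (a - x) + t *\<^sub>R (p - x)) - p"
    by (simp add: algebra_simps)
  also have "\<dots> = 0"
    using st(3) by simp
  finally show False
    using not_collinear_combination_eq_0[OF assms] st(1) by blast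
qed

lemma apex_not_in_open_wedge:
  assumes "\<not> collinear {x, a, q}"
  shows "x \<notin> open_wedge x a q"
proof
  assume "x \<in> open_wedge x a q"
  then obtain s t where st: "0 < s" "0 < t" "x = x + s *\<^sub>R (a - x) + t *\<^sub>R (q - x)"
    unfolding open_wedge_def by blast
  have "s *\<^sub>R (a - x) + t *\<^sub>R (q - x) = (x + s *\<^sub>R (a - x) + t *\<^sub>R (q - x)) - x"
    by (simp add: algebra_simps)
  also have "\<dots> = 0"
    using st(3) by simp
  finally show False
    using not_collinear_combination_eq_0[OF assms] st(1) by blast
qed

lemma in_open_wedgeI:
  assumes "\<not> collinear {x, a, p}" and "\<not> collinear {x, q, p}"
    and "0 \<le> s" and "0 \<le> t" and p: "p - x = s *\<^sub>R (a - x) + t *\<^sub>R (q - x)"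
  shows "p \<in> open_wedge x a q"
proof -
  have "s \<noteq> 0"
    using assms(2) p collinear_if_diff_scaled[of p x t q] by auto
  moreover have "t \<noteq> 0"
    using assms(1) p collinear_if_diff_scaled[of p x s a] by auto
  moreover have "p = x + s *\<^sub>R (a - x) + t *\<^sub>R (q - x)"
    using p by (simp add: algebra_simps)
  ultimately show ?thesis
    using assms(3,4) unfolding open_wedge_def by force
qed

lemma closed_segment_in_closed_wedge:
  fixes x a q s z :: "'a::real_vector"
  assumes "s \<in> insert a (open_wedge x a q)" and "z \<in> closed_segment q s"
  obtains A C where "0 \<le> A" "0 \<le> C" "0 < A + C" "z - x = A *\<^sub>R (a - x) + C *\<^sub>R (q - x)"
proof -
  obtain t where t: "0 \<le> t" "t \<le> 1" "z = (1 - t) *\<^sub>R q + t *\<^sub>R s"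
    using assms(2) by (auto simp: in_segment)
  obtain \<sigma> \<rho> where s: "s - x = \<sigma> *\<^sub>R (a - x) + \<rho> *\<^sub>R (q - x)" "0 \<le> \<sigma>" "0 \<le> \<rho>" "0 < \<sigma> + \<rho>"
  proof (cases "s = a")
    case True
    then show ?thesis
      using that[of 1 0] by simp
  next
    case False
    then obtain \<sigma> \<rho> where "0 < \<sigma>" "0 < \<rho>" "s = x + \<sigma> *\<^sub>R (a - x) + \<rho> *\<^sub>R (q - x)"
      using assms(1) unfolding open_wedge_def by blast
    then show ?thesis
      using that[of \<sigma> \<rho>] by simp
  qed
  have "z - x = (1 - t) *\<^sub>R (q - x) + t *\<^sub>R (s - x)"
    using t(3) by (simp add: algebra_simps)
  also have "\<dots> = (t * \<sigma>) *\<^sub>R (a - x) + (1 - t + t * \<rho>) *\<^sub>R (q - x)"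
    unfolding s(1) by (simp add: algebra_simps)
  finally have "z - x = (t * \<sigma>) *\<^sub>R (a - x) + (1 - t + t * \<rho>) *\<^sub>R (q - x)" .
  moreover have "0 \<le> t * \<sigma>" "0 \<le> t * \<rho>"
    using t(1) s(2,3) by simp_all
  moreover have "0 < t * \<sigma> + (1 - t + t * \<rho>)"
    using calculation(2,3) t(2) s(4) by (cases "t = 1") simp_all
  ultimately show ?thesis
    using t(2) by (intro that[of "t * \<sigma>" "1 - t + t * \<rho>"]) simp_all
qed

lemma closed_segments_disjoint_outside_open_wedge:
  fixes x a q p s :: "'a::real_vector"
  assumes "\<not> collinear {x, a, q}" and "\<not> collinear {x, a, p}" and "\<not> collinear {x, q, p}"
    and "p \<notin> open_wedge x a q" and "s \<in> insert a (open_wedge x a q)"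
  shows "closed_segment x p \<inter> closed_segment q s = {}"
proof (rule ccontr)
  assume "closed_segment x p \<inter> closed_segment q s \<noteq> {}"
  then obtain z where "z \<in> closed_segment x p" and "z \<in> closed_segment q s"
    by blast
  then obtain \<tau> where \<tau>: "0 \<le> \<tau>" "z - x = \<tau> *\<^sub>R (p - x)"
    by (auto simp: in_segment algebra_simps)
  obtain A C where AC: "0 \<le> A" "0 \<le> C" "0 < A + C" "z - x = A *\<^sub>R (a - x) + C *\<^sub>R (q - x)"
    using closed_segment_in_closed_wedge[OF assms(5) \<open>z \<in> closed_segment q s\<close>] by blast
  have "\<tau> \<noteq> 0"
    using not_collinear_combination_eq_0[OF assms(1), of A C] \<tau>(2) AC(3,4) by auto
  then have "p - x = (1 / \<tau>) *\<^sub>R (z - x)"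
    using \<tau>(2) by simp
  also have "\<dots> = (A / \<tau>) *\<^sub>R (a - x) + (C / \<tau>) *\<^sub>R (q - x)"
    unfolding AC(4) by (simp add: scaleR_add_right)
  finally have "p \<in> open_wedge x a q"
    using assms(2,3) AC(1,2) \<tau>(1) by (intro in_open_wedgeI) simp_all
  then show False
    using assms(4) by contradiction
qed

lemma exists_empty_open_wedge:
  assumes fin: "finite Y" and "Y \<noteq> {}" and nc: "\<And>y. y \<in> Y \<Longrightarrow> \<not> collinear {x, a, y}"
  obtains q where "q \<in> Y" and "Y \<inter> open_wedge x a q = {}"
proof -
  let ?inside = "\<lambda>q. card (Y \<inter> open_wedge x a q)"
  obtain q where q: "q \<in> Y" and min_q: "Min (?inside ` Y) = ?inside q"
    using obtains_MIN[OF fin \<open>Y \<noteq> {}\<close>, where f = ?inside] by blast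
  have "Y \<inter> open_wedge x a q = {}"
  proof (rule ccontr)
    assume "Y \<inter> open_wedge x a q \<noteq> {}"
    then obtain p where p: "p \<in> Y" "p \<in> open_wedge x a q"
      by blast
    have "Y \<inter> open_wedge x a p \<subset> Y \<inter> open_wedge x a q"
      using open_wedge_mono[OF p(2)] not_in_own_open_wedge[OF nc[OF p(1)]] p by blast
    then have "?inside p < ?inside q"
      using fin by (simp add: psubset_card_mono)
    moreover have "?inside q \<le> ?inside p"
      using fin p(1) by (simp flip: min_q)
    ultimately show False
      by simp
  qed
  then show ?thesis
    using q that by blast
qed

section \<open>Non-crossing double stars\<close>

lemma general_positionD:
  "general_position P \<Longrightarrow> a \<in> P \<Longrightarrow> b \<in> P \<Longrightarrow> c \<in> P \<Longrightarrow> a \<noteq> b \<Longrightarrow> a \<noteq> c \<Longrightarrow> b \<noteq> c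
    \<Longrightarrow> \<not> collinear {a, b, c}"
  unfolding general_position_def by blast

lemma convex_hull_edges_common_endpoint:
  assumes "general_position P" and "v \<in> P" "a \<in> P" "b \<in> P" "v \<noteq> a" "v \<noteq> b" "a \<noteq> b"
  shows "convex hull {v, a} \<inter> convex hull {v, b} \<subseteq> {v, a} \<inter> {v, b}"
proof -
  have "\<not> collinear {a, v, b}"
    using general_positionD[OF assms(1,3,2,4)] assms(5-7) by simp
  then have "convex hull {a, v} \<inter> convex hull {v, b} = {v}"
    unfolding segment_convex_hull[symmetric] by (rule Int_closed_segment[OF disjI2])
  then show ?thesis
    by (simp add: insert_commute)
qed

definition double_star :: "point \<Rightarrow> point \<Rightarrow> point set \<Rightarrow> point set \<Rightarrow> edge set" where
  "double_star c d C D = insert {c, d} ((\<lambda>p. {c, p}) ` C \<union> (\<lambda>p. {d, p}) ` D)"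

lemma double_star_edgeE:
  assumes "e \<in> double_star c d C D"
  obtains y where "y \<in> insert d C" and "e = {c, y}"
  | y where "y \<in> insert c D" and "e = {d, y}"
  using assms unfolding double_star_def by blast

lemma double_star_centre_edges:
  shows "y \<in> insert d C \<Longrightarrow> {c, y} \<in> double_star c d C D"
    and "y \<in> insert c D \<Longrightarrow> {d, y} \<in> double_star c d C D"
proof -
  show "{c, y} \<in> double_star c d C D" if "y \<in> insert d C"
    using that unfolding double_star_def by blast
  show "{d, y} \<in> double_star c d C D" if "y \<in> insert c D"
  proof (cases "y = c")
    case True
    then show ?thesis
      unfolding double_star_def by (simp add: insert_commute)
  next
    case False
    then show ?thesis
      using that unfolding double_star_def by blast
  qed
qed

locale double_star_partition =
  fixes P :: "point set" and c d :: point and C D :: "point set"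
  assumes c: "c \<in> P" and d: "d \<in> P" and cd: "c \<noteq> d"
    and partition: "C \<union> D = P - {c, d}" and disjoint: "C \<inter> D = {}"
begin

abbreviation "T \<equiv> double_star c d C D"

lemmas centre_edges = double_star_centre_edges[where c = c and d = d and C = C and D = D]

lemma double_star_subset: "T \<subseteq> complete_edges P"
  using c d cd partition by (fastforce elim: double_star_edgeE)

lemma diameter_le_double_star: "diameter_le P T 3"
  unfolding diameter_le_def
proof (intro ballI)
  fix u v assume "u \<in> P" "v \<in> P"
  define hub where "hub w = (if w \<in> insert c C then c else d)" for w
  have to_hub: "w = hub w \<or> ({w, hub w} \<in> T \<and> {hub w, w} \<in> T)" if "w \<in> P" for w
  proof (cases "w \<in> insert c C")
    case True
    then show ?thesis
      using centre_edges(1)[of w] unfolding hub_def by (auto simp: insert_commute)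
  next
    case False
    then have "w \<in> insert d D"
      using that partition by blast
    then show ?thesis
      using centre_edges(2)[of w] False unfolding hub_def by (auto simp: insert_commute)
  qed
  have "{c, d} \<in> T" "{d, c} \<in> T"
    using centre_edges(1)[of d] by (simp_all add: insert_commute)
  then have between_hubs: "hub u = hub v \<or> {hub u, hub v} \<in> T"
    unfolding hub_def by simp
  let ?xs = "remdups_adj [u, hub u, hub v, v]"
  have "walk T ?xs"
    using to_hub[OF \<open>u \<in> P\<close>] to_hub[OF \<open>v \<in> P\<close>] between_hubs
    by (intro walk_remdups_adj) (auto simp del: remdups_adj.simps)
  moreover have "length ?xs \<le> 3 + 1"
    using remdups_adj_length[of "[u, hub u, hub v, v]"] by simp
  moreover have "hd ?xs = u" "last ?xs = v"
    by simp_all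
  ultimately show "\<exists>xs. walk T xs \<and> hd xs = u \<and> last xs = v \<and> length xs \<le> 3 + 1"
    by blast
qed

lemma two_neighbours_imp_centre:
  assumes "{v, a} \<in> T" and "{v, b} \<in> T" and "a \<noteq> b"
  shows "v = c \<or> v = d"
proof (rule ccontr)
  assume v: "\<not> (v = c \<or> v = d)"
  have leaf: "(v \<in> C \<and> y = c) \<or> (v \<in> D \<and> y = d)" if "{v, y} \<in> T" for y
    using that v by (elim double_star_edgeE; unfold doubleton_eq_iff; blast)
  show False
    using leaf[OF assms(1)] leaf[OF assms(2)] assms(3) disjoint by blast
qed

lemma double_star_acyclic: "\<not> has_cycle T"
proof
  assume "has_cycle T"
  then obtain S where S: "finite S" "3 \<le> card S"
    and nbrs: "\<And>v. v \<in> S \<Longrightarrow> \<exists>a\<in>S. \<exists>b\<in>S. a \<noteq> b \<and> {v, a} \<in> T \<and> {v, b} \<in> T"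
    using has_cycle_two_neighbours[OF \<open>has_cycle T\<close>] by blast
  have "S \<subseteq> {c, d}"
    using nbrs two_neighbours_imp_centre by blast
  then have "card S \<le> card {c, d}"
    by (simp add: card_mono)
  also have "\<dots> \<le> 2"
    by (simp add: card_insert_if)
  finally have "card S \<le> 2" .
  then show False
    using S(2) by simp
qed

lemma double_star_spanning_tree: "spanning_tree P T"
  using double_star_subset diameter_le_double_star double_star_acyclic
  unfolding spanning_tree_def diameter_le_def connected_graph_def by blast

lemma centre_neighbours_in_P:
  shows "y \<in> insert d C \<Longrightarrow> y \<in> P \<and> c \<noteq> y"
    and "y \<in> insert c D \<Longrightarrow> y \<in> P \<and> d \<noteq> y"
  using partition d c cd by blast+

lemma convex_hull_cross_edges:
  assumes gp: "general_position P"
    and sep: "\<forall>p\<in>C. \<forall>s\<in>D. closed_segment c p \<inter> closed_segment d s = {}"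
    and y1: "y1 \<in> insert d C" and y2: "y2 \<in> insert c D" and ne: "{c, y1} \<noteq> {d, y2}"
  shows "convex hull {c, y1} \<inter> convex hull {d, y2} \<subseteq> {c, y1} \<inter> {d, y2}"
proof -
  consider "y1 = d" | "y2 = c" | "y1 \<in> C" "y2 \<in> D"
    using y1 y2 by blast
  then show ?thesis
  proof cases
    case 1
    then have "y2 \<noteq> c"
      using ne by (auto simp: insert_commute)
    then show ?thesis
      using convex_hull_edges_common_endpoint[OF gp d c, of y2] 1 cd centre_neighbours_in_P(2)[OF y2]
      by (simp add: insert_commute doubleton_eq_iff)
  next
    case 2
    then have "y1 \<noteq> d"
      using ne by (auto simp: insert_commute)
    then show ?thesis
      using convex_hull_edges_common_endpoint[OF gp c _ d, of y1] 2 cd centre_neighbours_in_P(1)[OF y1]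
      by (simp add: insert_commute doubleton_eq_iff)
  next
    case 3
    then have "closed_segment c y1 \<inter> closed_segment d y2 = {}"
      using sep by blast
    then show ?thesis
      by (simp add: segment_convex_hull)
  qed
qed

lemma double_star_non_crossing:
  assumes gp: "general_position P"
    and sep: "\<forall>p\<in>C. \<forall>s\<in>D. closed_segment c p \<inter> closed_segment d s = {}"
  shows "non_crossing T"
  unfolding non_crossing_def
proof (intro ballI impI)
  fix e f assume "e \<in> T" "f \<in> T" "e \<noteq> f"
  note same_centre = convex_hull_edges_common_endpoint[OF gp]
  note cross = convex_hull_cross_edges[OF gp sep]
  from \<open>e \<in> T\<close> show "convex hull e \<inter> convex hull f \<subseteq> e \<inter> f"
  proof (cases rule: double_star_edgeE)
    case (1 y1)
    from \<open>f \<in> T\<close> show ?thesis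
    proof (cases rule: double_star_edgeE)
      case (1 y2)
      then show ?thesis
        using same_centre[of c y1 y2] \<open>e = {c, y1}\<close> \<open>e \<noteq> f\<close> c
          centre_neighbours_in_P(1)[OF \<open>y1 \<in> insert d C\<close>] centre_neighbours_in_P(1)
        by (simp add: doubleton_eq_iff)
    next
      case (2 y2)
      then show ?thesis
        using cross[of y1 y2] \<open>e = {c, y1}\<close> \<open>y1 \<in> insert d C\<close> \<open>e \<noteq> f\<close> by simp
    qed
  next
    case (2 y1)
    from \<open>f \<in> T\<close> show ?thesis
    proof (cases rule: double_star_edgeE)
      case (1 y2)
      then show ?thesis
        using cross[of y2 y1] \<open>e = {d, y1}\<close> \<open>y1 \<in> insert c D\<close> \<open>e \<noteq> f\<close> by (simp add: Int_commute)
    next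
      case (2 y2)
      then show ?thesis
        using same_centre[of d y1 y2] \<open>e = {d, y1}\<close> \<open>e \<noteq> f\<close> d
          centre_neighbours_in_P(2)[OF \<open>y1 \<in> insert c D\<close>] centre_neighbours_in_P(2)
        by (simp add: doubleton_eq_iff)
    qed
  qed
qed

lemma double_star_in_simple_trees:
  assumes "general_position P"
    and "\<forall>p\<in>C. \<forall>s\<in>D. closed_segment c p \<inter> closed_segment d s = {}"
  shows "T \<in> simple_trees_diam_le P 3"
  using double_star_spanning_tree double_star_non_crossing[OF assms] diameter_le_double_star
  unfolding simple_trees_diam_le_def by blast

end

lemma wedge_double_star_in_simple_trees:
  assumes gp: "general_position P" and "x \<in> P" "a \<in> P" "q \<in> P" "x \<noteq> a" "x \<noteq> q" "a \<noteq> q"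
  defines "D \<equiv> insert a (P \<inter> open_wedge x a q)"
  shows "double_star x q (P - {x, q} - D) D \<in> simple_trees_diam_le P 3"
proof -
  have nc: "\<not> collinear {x, a, p}" if "p \<in> P" "x \<noteq> p" "a \<noteq> p" for p
    using general_positionD[OF gp assms(2,3) that(1)] assms(5) that(2,3) by blast
  have ncq: "\<not> collinear {x, a, q}"
    using nc assms(4,6,7) .
  have "D \<subseteq> P - {x, q}"
    using assms(2-7) apex_not_in_open_wedge[OF ncq] not_in_own_open_wedge[OF ncq]
    unfolding D_def by blast
  then interpret double_star_partition P x q "P - {x, q} - D" D
    using assms(2,4,6) by unfold_locales auto
  show ?thesis
  proof (rule double_star_in_simple_trees[OF gp], intro ballI)
    fix p s assume "p \<in> P - {x, q} - D" "s \<in> D"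
    then have p: "p \<in> P" "x \<noteq> p" "q \<noteq> p" "a \<noteq> p" "p \<notin> open_wedge x a q"
      unfolding D_def by auto
    have "\<not> collinear {x, q, p}"
      using general_positionD[OF gp assms(2,4) p(1)] assms(6) p(2,3) by blast
    moreover have "s \<in> insert a (open_wedge x a q)"
      using \<open>s \<in> D\<close> unfolding D_def by blast
    ultimately show "closed_segment x p \<inter> closed_segment q s = {}"
      using closed_segments_disjoint_outside_open_wedge ncq nc[OF p(1,2,4)] p(5) by blast
  qed
qed

section \<open>Blockers\<close>

lemma empty_in_simple_trees_diam_le:
  assumes "finite P" and "card P \<le> 1"
  shows "{} \<in> simple_trees_diam_le P k"
proof -
  have single: "u = v" if "u \<in> P" "v \<in> P" for u v
    using assms that card_le_Suc0_iff_eq by auto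
  have "walk {} [u]" for u
    by (simp add: walk_def)
  then have "diameter_le P {} k" "connected_graph P {}"
    using single unfolding diameter_le_def connected_graph_def by fastforce+
  moreover have "\<not> has_cycle {}"
    by (auto simp: has_cycle_def walk_def)
  ultimately show ?thesis
    by (simp add: simple_trees_diam_le_def spanning_tree_def non_crossing_def)
qed

lemma star_blocks_simple_trees:
  assumes "v \<in> P" and "w \<in> P" and "v \<noteq> w"
  shows "blocks (simple_trees_diam_le P k) ((\<lambda>p. {v, p}) ` (P - {v}))"
  unfolding blocks_def
proof
  fix T assume "T \<in> simple_trees_diam_le P k"
  then have T: "T \<subseteq> complete_edges P" "connected_graph P T"
    by (auto simp: simple_trees_diam_le_def spanning_tree_def)
  then have "reachable T v w"
    using assms by (simp add: connected_graph_iff_reachable)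
  then obtain u where u: "{v, u} \<in> T"
    using assms(3) by (rule closer_neighbour)
  then have "{v, u} \<in> complete_edges P"
    using T(1) by blast
  then have "u \<in> P - {v}"
    by auto
  then have "{v, u} \<in> (\<lambda>p. {v, p}) ` (P - {v})"
    by blast
  then show "(\<lambda>p. {v, p}) ` (P - {v}) \<inter> T \<noteq> {}"
    using u by blast
qed

lemma blocker_card_less:
  assumes fin: "finite P" and B: "is_blocker P (simple_trees_diam_le P k) B"
  shows "card B < card P"
proof -
  have "\<not> card P \<le> 1"
    using empty_in_simple_trees_diam_le[OF fin] B unfolding is_blocker_def blocks_def by blast
  then have "\<exists>v\<in>P. \<exists>w\<in>P. v \<noteq> w"
    using card_le_Suc0_iff_eq[OF fin] by simp
  then obtain v w where vw: "v \<in> P" "w \<in> P" "v \<noteq> w"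
    by blast
  let ?star = "(\<lambda>p. {v, p}) ` (P - {v})"
  have "?star \<subseteq> complete_edges P"
    using vw(1) unfolding complete_edges_def by blast
  then have "card B \<le> card ?star"
    using B star_blocks_simple_trees[OF vw] by (simp add: is_blocker_def)
  also have "\<dots> \<le> card (P - {v})"
    by (rule card_image_le) (simp add: fin)
  also have "\<dots> < card P"
    by (rule card_Diff1_less[OF fin vw(1)])
  finally show ?thesis .
qed

lemma exists_unreachable_if_not_connected:
  assumes "x \<in> V" and "\<not> connected_graph V E"
  obtains y where "y \<in> V" and "\<not> reachable E x y"
proof -
  have "\<exists>y\<in>V. \<not> reachable E x y"
  proof (rule ccontr)
    assume "\<not> ?thesis"
    then have "reachable E u v" if "u \<in> V" "v \<in> V" for u v
      using that reachable_sym reachable_trans by (meson assms(1))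
    then show False
      using assms(2) unfolding connected_graph_iff_reachable by blast
  qed
  then show ?thesis
    using that by blast
qed

lemma avoiding_tree_if_isolated:
  assumes "general_position P" and "x \<in> P" and "y \<in> P" and "x \<noteq> y"
    and isolated: "\<forall>e\<in>B. x \<notin> e"
  obtains T where "T \<in> simple_trees_diam_le P 3" and "T \<inter> B = {}"
proof -
  interpret double_star_partition P x y "P - {x, y}" "{}"
    using assms(2-4) by unfold_locales auto
  have "T \<in> simple_trees_diam_le P 3"
    using double_star_in_simple_trees[OF assms(1)] by simp
  moreover have "T \<inter> B = {}"
    using isolated unfolding double_star_def by blast
  ultimately show ?thesis
    using that by blast
qed

lemma double_star_avoids_leaf_edges:
  assumes leaf: "\<forall>e\<in>B. x \<in> e \<longrightarrow> e = {x, a}" and "a \<notin> C" and "a \<noteq> q"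
    and "\<not> reachable B x q" and "\<forall>z\<in>D. reachable B x z"
  shows "double_star x q C D \<inter> B = {}"
proof (rule ccontr)
  assume "double_star x q C D \<inter> B \<noteq> {}"
  then obtain e where "e \<in> double_star x q C D" "e \<in> B"
    by blast
  then show False
  proof (cases rule: double_star_edgeE)
    case (1 z)
    then have "z = a"
      using leaf \<open>e \<in> B\<close> by (auto simp: doubleton_eq_iff)
    then show False
      using 1 assms(2,3) by blast
  next
    case (2 z)
    show False
    proof (cases "z = x")
      case True
      then show False
        using 2 leaf \<open>e \<in> B\<close> assms(3) by (auto simp: doubleton_eq_iff)
    next
      case False
      then have "reachable B x z"
        using 2 assms(5) by blast
      moreover have "{z, q} \<in> B"
        using 2 \<open>e \<in> B\<close> by (simp add: insert_commute)
      ultimately show False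
        using assms(4) reachable_trans reachable_edge by blast
    qed
  qed
qed

lemma avoiding_tree_if_leaf_and_unreachable:
  assumes gp: "general_position P" and fin: "finite P" and B: "B \<subseteq> complete_edges P"
    and leaf_edge: "{x, a} \<in> B" and leaf: "\<forall>e\<in>B. x \<in> e \<longrightarrow> e = {x, a}"
    and "y \<in> P" and "\<not> reachable B x y"
  obtains T where "T \<in> simple_trees_diam_le P 3" and "T \<inter> B = {}"
proof -
  have "{x, a} \<in> complete_edges P"
    using leaf_edge B by blast
  then have xa: "x \<in> P" "a \<in> P" "x \<noteq> a"
    by simp_all
  define Y where "Y = {y \<in> P. \<not> reachable B x y}"
  have "x \<notin> Y" "a \<notin> Y"
    using reachable_refl reachable_edge[OF leaf_edge] unfolding Y_def by blast+
  have "finite Y" "Y \<noteq> {}"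
    using fin assms(6,7) unfolding Y_def by (simp, blast)
  moreover have "\<not> collinear {x, a, p}" if "p \<in> Y" for p
    using general_positionD[OF gp xa(1,2), of p] that \<open>x \<notin> Y\<close> \<open>a \<notin> Y\<close> xa(3)
    unfolding Y_def by blast
  ultimately obtain q where "q \<in> Y" and empty_wedge: "Y \<inter> open_wedge x a q = {}"
    by (rule exists_empty_open_wedge)
  then have q: "q \<in> P" "x \<noteq> q" "a \<noteq> q" "\<not> reachable B x q"
    using \<open>x \<notin> Y\<close> \<open>a \<notin> Y\<close> unfolding Y_def by auto
  define D where "D = insert a (P \<inter> open_wedge x a q)"
  have "double_star x q (P - {x, q} - D) D \<in> simple_trees_diam_le P 3"
    using wedge_double_star_in_simple_trees[OF gp xa(1,2) q(1) xa(3) q(2,3)] unfolding D_def .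
  moreover have "double_star x q (P - {x, q} - D) D \<inter> B = {}"
  proof (rule double_star_avoids_leaf_edges[OF leaf _ q(3,4)])
    show "a \<notin> P - {x, q} - D"
      unfolding D_def by blast
    show "\<forall>z\<in>D. reachable B x z"
    proof
      fix z assume "z \<in> D"
      then consider "z = a" | "z \<in> P" "z \<in> open_wedge x a q"
        unfolding D_def by blast
      then show "reachable B x z"
      proof cases
        case 1
        then show ?thesis
          using reachable_edge[OF leaf_edge] by simp
      next
        case 2
        then show ?thesis
          using empty_wedge unfolding Y_def by blast
      qed
    qed
  qed
  ultimately show ?thesis
    using that by blast
qed

lemma avoiding_tree_if_degree_le_1:
  assumes gp: "general_position P" and fin: "finite P" and B: "B \<subseteq> complete_edges P"
    and "x \<in> P" and deg: "card {e\<in>B. x \<in> e} \<le> 1" and "y \<in> P" and "\<not> reachable B x y"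
  obtains T where "T \<in> simple_trees_diam_le P 3" and "T \<inter> B = {}"
proof (cases "card {e\<in>B. x \<in> e} = 0")
  case True
  have "finite B"
    using B fin finite_complete_edges finite_subset by blast
  then have "\<forall>e\<in>B. x \<notin> e"
    using True by simp
  moreover have "x \<noteq> y"
    using assms(7) reachable_refl by blast
  ultimately show ?thesis
    using avoiding_tree_if_isolated[OF gp assms(4,6)] that by blast
next
  case False
  then have "card {e\<in>B. x \<in> e} = 1"
    using deg by simp
  then obtain e where e: "{e\<in>B. x \<in> e} = {e}"
    by (rule card_1_singletonE)
  then have "e \<in> complete_edges P" "x \<in> e"
    using B by auto
  then obtain a where "e = {x, a}"
    by (rule complete_edge_through)
  then have "{x, a} \<in> B" "\<forall>e\<in>B. x \<in> e \<longrightarrow> e = {x, a}"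
    using e by blast+
  then show ?thesis
    using that by (rule avoiding_tree_if_leaf_and_unreachable[OF gp fin B _ _ assms(6,7)])
qed

theorem proposition2:
  fixes P :: "(real \<times> real) set" and B :: "(real \<times> real) set set"
  assumes "finite P" and "general_position P"
    and "is_blocker P (simple_trees_diam_le P 3) B"
  shows "spanning_tree P B"
proof -
  have B: "B \<subseteq> complete_edges P" and blocks: "blocks (simple_trees_diam_le P 3) B"
    using assms(3) by (simp_all add: is_blocker_def)
  have card_B: "card B < card P"
    using blocker_card_less[OF assms(1,3)] .
  obtain x where x: "x \<in> P" "card {e\<in>B. x \<in> e} \<le> 1"
    using exists_degree_le_1[OF assms(1) B card_B] by blast
  have connected: "connected_graph P B"
  proof (rule ccontr)
    assume "\<not> connected_graph P B"
    then obtain y where "y \<in> P" "\<not> reachable B x y"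
      using exists_unreachable_if_not_connected[OF x(1)] by blast
    then obtain T where "T \<in> simple_trees_diam_le P 3" "T \<inter> B = {}"
      using avoiding_tree_if_degree_le_1[OF assms(2,1) B x] by blast
    then show False
      using blocks unfolding blocks_def by blast
  qed
  moreover have "\<not> has_cycle B"
    using card_le_card_edges_if_connected_has_cycle[OF assms(1) B connected] card_B by linarith
  ultimately show ?thesis
    using B unfolding spanning_tree_def by blast
qed

end
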